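(* Let $T$ be a TCD map on a minimal BTB graph $G$ and $H$ a hyperplane generic with respect to $T$. For an internal white vertex $w$ with black neighbours $b_1,\dots,b_m$ in counterclockwise order, let $w_i,w_i'$ be the other two neighbours of $b_i$ such that the counterclockwise order around $b_i$ is $w,w_i,w_i'$. Then, computing in the affine chart $\mathbb{CP}^d\setminus H$, $$Y_w=(-1)^{m+1}\,\mathrm{sr}\bigl(T(w);T(w_1),T(w_1'),\dots,T(w_m),T(w_m')\bigr)=-\prod_{i=1}^m\lambda\bigl(T(w_i),T(w_i'),T(w)\bigr).$$
   Context: A BTB graph is a planar bipartite graph (black $B$, white $W$) in a disk or cactus, with boundary white vertices on the boundary and every black vertex of degree $3$. It is minimal if zig-zag paths (turning maximally left at white and right at black vertices) are never closed, never traverse an edge twice, and no two both traverse two distinct edges $e_1$ then $e_2$. A TCD map is $T:W\to\mathbb{CP}^d$ such that the neighbours of each black vertex have pairwise distinct collinear images. $H=\mathbb P(\ker h)$ is generic if it contains no $T(w)$. A VRC in affine gauge with respect to $H$ consists of lifts $V(w)$ with $h(V(w))=1$ and edge weights with $\sum_{w\sim b}\mu(bw)V(w)=0$, so that $\sum_{w\sim b}\mu(bw)=0$. The affine cluster variable is $Y_w=(-1)^{m+1}\prod_{i=1}^m\mu(b_iw_i')/\mu(b_iw_i)$ in this gauge. $\lambda(P_1,P_2,P_3)=(P_1-P_3)/(P_2-P_3)$ for collinear points in an affine chart. The star-ratio of points $P,P_1,P_1',\dots,P_m,P_m'$ with $P$ on each line $P_iP_i'$ is $\mathrm{sr}(P;P_1,P_1',\dots,P_m,P_m')=\prod_i(P_i-P)/\prod_i(P-P_i')$.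 *)

theory Defs
  imports "HOL-Analysis.Analysis"
begin

text \<open>The planar embedding is recorded by a rotation system: nbr v lists the
neighbours of v in counterclockwise order (cyclically). For a boundary white
vertex the list starts right after the boundary (going counterclockwise), i.e.
the gap between the last and the first entry is the exterior of the disk.\<close>

definition idx :: "('v \<Rightarrow> 'v list) \<Rightarrow> 'v \<Rightarrow> 'v \<Rightarrow> nat" where
  "idx nbr v u = (THE j. j < length (nbr v) \<and> nbr v ! j = u)"

definition cnext :: "('v \<Rightarrow> 'v list) \<Rightarrow> 'v \<Rightarrow> 'v \<Rightarrow> 'v" where
  "cnext nbr v u = nbr v ! ((idx nbr v u + 1) mod length (nbr v))"

definition cprev :: "('v \<Rightarrow> 'v list) \<Rightarrow> 'v \<Rightarrow> 'v \<Rightarrow> 'v" where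
  "cprev nbr v u = nbr v ! ((idx nbr v u + length (nbr v) - 1) mod length (nbr v))"

definition btb_graph :: "'v set \<Rightarrow> 'v set \<Rightarrow> 'v set \<Rightarrow> ('v \<Rightarrow> 'v list) \<Rightarrow> bool" where
  "btb_graph W B Wb nbr \<longleftrightarrow>
     finite W \<and> finite B \<and> W \<inter> B = {} \<and> Wb \<subseteq> W \<and>
     (\<forall>v \<in> W \<union> B. distinct (nbr v)) \<and>
     (\<forall>w \<in> W. set (nbr w) \<subseteq> B) \<and>
     (\<forall>b \<in> B. set (nbr b) \<subseteq> W) \<and>
     (\<forall>b \<in> B. \<forall>w \<in> W. b \<in> set (nbr w) \<longleftrightarrow> w \<in> set (nbr b)) \<and>
     (\<forall>b \<in> B. length (nbr b) = 3)"

definition is_dedge :: "'v set \<Rightarrow> 'v set \<Rightarrow> ('v \<Rightarrow> 'v list) \<Rightarrow> 'v \<times> 'v \<Rightarrow> bool" where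
  "is_dedge W B nbr d \<longleftrightarrow> (case d of (u, v) \<Rightarrow>
      ((u \<in> W \<and> v \<in> B) \<or> (u \<in> B \<and> v \<in> W)) \<and> v \<in> set (nbr u))"

definition uedge :: "'v \<times> 'v \<Rightarrow> 'v set" where
  "uedge d = {fst d, snd d}"

text \<open>One step of a zig-zag path: arriving at v along (u,v), turn maximally
right at a black vertex (counterclockwise successor of u) and maximally left at
a white vertex (clockwise successor of u). At a boundary white vertex, turning
across the boundary ends the path.\<close>
definition zz_next :: "'v set \<Rightarrow> 'v set \<Rightarrow> ('v \<Rightarrow> 'v list) \<Rightarrow> 'v \<times> 'v \<Rightarrow> ('v \<times> 'v) option" where
  "zz_next B Wb nbr d = (case d of (u, v) \<Rightarrow>
      if v \<in> B then Some (v, cnext nbr v u)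
      else if v \<in> Wb \<and> idx nbr v u = 0 then None
      else Some (v, cprev nbr v u))"

definition zz_walk :: "'v set \<Rightarrow> 'v set \<Rightarrow> 'v set \<Rightarrow> ('v \<Rightarrow> 'v list) \<Rightarrow> ('v \<times> 'v) list \<Rightarrow> bool" where
  "zz_walk W B Wb nbr ds \<longleftrightarrow> ds \<noteq> [] \<and> (\<forall>d \<in> set ds. is_dedge W B nbr d) \<and>
     (\<forall>i. Suc i < length ds \<longrightarrow> zz_next B Wb nbr (ds ! i) = Some (ds ! Suc i))"

definition minimal_btb :: "'v set \<Rightarrow> 'v set \<Rightarrow> 'v set \<Rightarrow> ('v \<Rightarrow> 'v list) \<Rightarrow> bool" where
  "minimal_btb W B Wb nbr \<longleftrightarrow>
     btb_graph W B Wb nbr \<and>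
     \<comment> \<open>no closed zig-zag paths\<close>
     (\<nexists>ds. zz_walk W B Wb nbr ds \<and> zz_next B Wb nbr (last ds) = Some (hd ds)) \<and>
     \<comment> \<open>no zig-zag path traverses an edge twice\<close>
     (\<forall>ds. zz_walk W B Wb nbr ds \<longrightarrow>
        (\<forall>i j. i < j \<and> j < length ds \<longrightarrow> uedge (ds ! i) \<noteq> uedge (ds ! j))) \<and>
     \<comment> \<open>no two distinct zig-zag paths both traverse e1 and then e2 (e1 \<noteq> e2)\<close>
     (\<nexists>ds1 ds2. zz_walk W B Wb nbr ds1 \<and> zz_walk W B Wb nbr ds2 \<and>
        hd ds1 \<noteq> hd ds2 \<and> uedge (hd ds1) = uedge (hd ds2) \<and>
        uedge (last ds1) = uedge (last ds2) \<and> uedge (hd ds1) \<noteq> uedge (last ds1))"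

section \<open>Geometry: CP^d via homogeneous coordinates in complex^'n, d+1 = CARD('n)\<close>

definition proj_eq :: "complex^'n \<Rightarrow> complex^'n \<Rightarrow> bool" where
  "proj_eq x y \<longleftrightarrow> (\<exists>c. c \<noteq> 0 \<and> x = c *s y)"

definition proj_collinear3 :: "complex^'n \<Rightarrow> complex^'n \<Rightarrow> complex^'n \<Rightarrow> bool" where
  "proj_collinear3 x y z \<longleftrightarrow>
     (\<exists>a b c :: complex. (a, b, c) \<noteq> (0, 0, 0) \<and> a *s x + b *s y + c *s z = 0)"

text \<open>T : W \<rightarrow> CP^d given by nonzero homogeneous representatives\<close>
definition tcd_map :: "'v set \<Rightarrow> 'v set \<Rightarrow> ('v \<Rightarrow> 'v list) \<Rightarrow> ('v \<Rightarrow> complex^'n) \<Rightarrow> bool" where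
  "tcd_map W B nbr T \<longleftrightarrow> (\<forall>w \<in> W. T w \<noteq> 0) \<and>
     (\<forall>b \<in> B. proj_collinear3 (T (nbr b ! 0)) (T (nbr b ! 1)) (T (nbr b ! 2)) \<and>
        (\<forall>i<3. \<forall>j<3. i \<noteq> j \<longrightarrow> \<not> proj_eq (T (nbr b ! i)) (T (nbr b ! j))))"

text \<open>the linear form h defining the hyperplane H = P(ker h)\<close>
definition lform :: "complex^'n \<Rightarrow> complex^'n \<Rightarrow> complex" where
  "lform hv x = (\<Sum>i\<in>UNIV. hv $ i * x $ i)"

definition generic_hyperplane :: "'v set \<Rightarrow> ('v \<Rightarrow> complex^'n) \<Rightarrow> complex^'n \<Rightarrow> bool" where
  "generic_hyperplane W T hv \<longleftrightarrow> hv \<noteq> 0 \<and> (\<forall>w \<in> W. lform hv (T w) \<noteq> 0)"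

text \<open>affine lift with h(V w) = 1; it is also the point T(w) in the affine chart
CP^d \ H, identified with the affine hyperplane h = 1\<close>
definition aff_lift :: "complex^'n \<Rightarrow> ('v \<Rightarrow> complex^'n) \<Rightarrow> 'v \<Rightarrow> complex^'n" where
  "aff_lift hv T w = (1 / lform hv (T w)) *s T w"

definition affine_vrc :: "'v set \<Rightarrow> ('v \<Rightarrow> 'v list) \<Rightarrow> complex^'n \<Rightarrow> ('v \<Rightarrow> complex^'n)
      \<Rightarrow> ('v \<Rightarrow> 'v \<Rightarrow> complex) \<Rightarrow> bool" where
  "affine_vrc B nbr hv T \<mu> \<longleftrightarrow>
     (\<forall>b \<in> B. (\<forall>w \<in> set (nbr b). \<mu> b w \<noteq> 0) \<and>
        (\<Sum>w \<in> set (nbr b). \<mu> b w *s aff_lift hv T w) = 0)"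

definition vratio :: "complex^'n \<Rightarrow> complex^'n \<Rightarrow> complex" where
  "vratio u v = (THE c. u = c *s v)"

definition lam :: "complex^'n \<Rightarrow> complex^'n \<Rightarrow> complex^'n \<Rightarrow> complex" where
  "lam P1 P2 P3 = vratio (P1 - P3) (P2 - P3)"

definition star_ratio :: "complex^'n \<Rightarrow> (nat \<Rightarrow> complex^'n) \<Rightarrow> (nat \<Rightarrow> complex^'n) \<Rightarrow> nat \<Rightarrow> complex" where
  "star_ratio P Q Q' m = (\<Prod>i<m. vratio (Q i - P) (P - Q' i))"

text \<open>affine cluster variable at the white vertex w, with b_i = nbr w ! i,
w_i = cnext b_i w, w_i' = cnext b_i w_i\<close>
definition affine_Y :: "('v \<Rightarrow> 'v list) \<Rightarrow> ('v \<Rightarrow> 'v \<Rightarrow> complex) \<Rightarrow> 'v \<Rightarrow> complex" where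
  "affine_Y nbr \<mu> w = (let m = length (nbr w) in
     (-1) ^ (m + 1) * (\<Prod>i<m. let b = nbr w ! i; wi = cnext nbr b w; wi' = cnext nbr b wi
                              in \<mu> b wi' / \<mu> b wi))"

end

theory Submission
  imports Defs
begin

text \<open>At a black vertex b with neighbours w, w', w'' the affine-gauge relation
  \<mu>(bw) V(w) + \<mu>(bw') V(w') + \<mu>(bw'') V(w'') = 0 has weight sum 0 (apply h,
  which is 1 on every affine lift). Eliminating \<mu>(bw) gives
  \<mu>(bw') (V(w') - V(w)) = \<mu>(bw'') (V(w) - V(w'')), so the factor
  \<mu>(bw'')/\<mu>(bw') of Y_w is the ratio (T(w') - T(w))/(T(w) - T(w'')), i.e. the
  corresponding factor of the star-ratio and minus \<lambda>(T(w'), T(w''), T(w)); the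
  denominator is nonzero because a TCD map separates the neighbours of b.
  Multiplying over the black neighbours of w gives both identities.\<close>

lemma cnext_triple:
  assumes "nbr b = [x, y, z]" "distinct [x, y, z]"
  shows "cnext nbr b x = y" "cnext nbr b y = z" "cnext nbr b z = x"
proof -
  have "idx nbr b x = 0" "idx nbr b y = 1" "idx nbr b z = 2"
    using assms unfolding idx_def
    by (auto intro!: the_equality simp: less_Suc_eq numeral_3_eq_3 numeral_2_eq_2)
  then show "cnext nbr b x = y" "cnext nbr b y = z" "cnext nbr b z = x"
    using assms unfolding cnext_def by auto
qed

lemma set_nbr_triangle_cnext:
  assumes "distinct (nbr b)" "length (nbr b) = 3" "u \<in> set (nbr b)"
  shows "set (nbr b) = {u, cnext nbr b u, cnext nbr b (cnext nbr b u)}"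
    and "distinct [u, cnext nbr b u, cnext nbr b (cnext nbr b u)]"
proof -
  obtain x y z where xyz: "nbr b = [x, y, z]"
    using assms(2) by (metis length_0_conv length_Suc_conv numeral_3_eq_3)
  then have "distinct [x, y, z]" using assms(1) by simp
  with xyz assms(3) cnext_triple[of nbr b x y z, OF xyz]
  show "set (nbr b) = {u, cnext nbr b u, cnext nbr b (cnext nbr b u)}"
    and "distinct [u, cnext nbr b u, cnext nbr b (cnext nbr b u)]"
    by auto
qed

lemma vratio_eqI:
  fixes u v :: "complex^'n"
  assumes "u = c *s v" "v \<noteq> 0"
  shows "vratio u v = c"
  unfolding vratio_def
proof (rule the_equality)
  show "u = c *s v" by fact
  fix d assume "u = d *s v"
  then have "(c - d) *s v = 0" using assms(1) by (simp add: algebra_simps)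
  moreover obtain k where "v $ k \<noteq> 0" using assms(2) by (metis vec_eq_iff zero_index)
  ultimately show "d = c"
    by (metis mult_eq_0_iff right_minus_eq vector_smult_component zero_index)
qed

lemma lform_smult: "lform hv (c *s x) = c * lform hv x"
  unfolding lform_def by (simp add: sum_distrib_left algebra_simps)

lemma lform_sum: "finite S \<Longrightarrow> lform hv (\<Sum>w\<in>S. f w) = (\<Sum>w\<in>S. lform hv (f w))"
  unfolding lform_def by (simp add: sum_component sum_distrib_left sum.swap[of _ S])

lemma lform_aff_lift: "lform hv (T x) \<noteq> 0 \<Longrightarrow> lform hv (aff_lift hv T x) = 1"
  unfolding aff_lift_def by (simp add: lform_smult)

lemma proj_eq_if_aff_lift_eq:
  assumes "lform hv (T x) \<noteq> 0" "lform hv (T y) \<noteq> 0" "aff_lift hv T x = aff_lift hv T y"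
  shows "proj_eq (T x) (T y)"
proof -
  have "T x = lform hv (T x) *s aff_lift hv T x"
    using assms(1) by (simp add: aff_lift_def)
  also have "\<dots> = (lform hv (T x) / lform hv (T y)) *s T y"
    using assms by (simp add: aff_lift_def)
  finally show ?thesis
    unfolding proj_eq_def using assms(1,2) by (intro exI[of _ "lform hv (T x) / lform hv (T y)"]) auto
qed

lemma affine_relation_diff:
  fixes P0 P1 P2 :: "'a::field^'n"
  assumes "m0 *s P0 + m1 *s P1 + m2 *s P2 = 0" "m0 + m1 + m2 = 0" "m1 \<noteq> 0"
  shows "P1 - P0 = (m2 / m1) *s (P0 - P2)"
  unfolding vec_eq_iff
proof
  fix k
  have "m0 * P0$k + m1 * P1$k + m2 * P2$k = 0"
    using assms(1) by (metis vector_add_component vector_smult_component zero_index)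
  moreover have "m0 = - (m1 + m2)"
    using assms(2) add_eq_0_iff2[of m0 "m1 + m2"] by (simp add: add.assoc)
  ultimately have "m1 * (P1$k - P0$k) = m2 * (P0$k - P2$k)"
    by (simp add: algebra_simps)
  then show "(P1 - P0) $ k = ((m2 / m1) *s (P0 - P2)) $ k"
    using assms(3) by (simp add: field_simps)
qed

lemma tcd_map_not_proj_eq:
  assumes "tcd_map W B nbr T" "b \<in> B" "length (nbr b) = 3"
    and "x \<in> set (nbr b)" "y \<in> set (nbr b)" "x \<noteq> y"
  shows "\<not> proj_eq (T x) (T y)"
proof -
  obtain i j where "i < 3" "nbr b ! i = x" "j < 3" "nbr b ! j = y"
    using assms(3-5) by (metis in_set_conv_nth)
  with assms(1,2,6) show ?thesis unfolding tcd_map_def by blast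
qed

lemma affine_vrc_weight_sum:
  assumes "btb_graph W B Wb nbr" "generic_hyperplane W T hv" "affine_vrc B nbr hv T \<mu>"
    and "b \<in> B"
  shows "(\<Sum>x\<in>set (nbr b). \<mu> b x) = 0"
proof -
  have "set (nbr b) \<subseteq> W" using assms(1,4) unfolding btb_graph_def by blast
  then have "lform hv (T x) \<noteq> 0" if "x \<in> set (nbr b)" for x
    using assms(2) that unfolding generic_hyperplane_def by blast
  then have "(\<Sum>x\<in>set (nbr b). \<mu> b x) = lform hv (\<Sum>x\<in>set (nbr b). \<mu> b x *s aff_lift hv T x)"
    by (simp add: lform_sum lform_smult lform_aff_lift)
  also have "\<dots> = 0"
    using assms(3,4) unfolding affine_vrc_def by (simp add: lform_def)
  finally show ?thesis .
qed

lemma affine_vrc_black_vertex_ratio: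
  assumes g: "btb_graph W B Wb nbr" and t: "tcd_map W B nbr T"
    and h: "generic_hyperplane W T hv" and v: "affine_vrc B nbr hv T \<mu>"
    and b: "b \<in> B" and w: "w \<in> set (nbr b)"
  defines "w' \<equiv> cnext nbr b w" and "w'' \<equiv> cnext nbr b (cnext nbr b w)"
    and "P \<equiv> aff_lift hv T"
  shows "vratio (P w' - P w) (P w - P w'') = \<mu> b w'' / \<mu> b w'"
    and "lam (P w') (P w'') (P w) = - (\<mu> b w'' / \<mu> b w')"
proof -
  have dl: "distinct (nbr b)" "length (nbr b) = 3" using g b unfolding btb_graph_def by auto
  have S: "set (nbr b) = {w, w', w''}" and D: "distinct [w, w', w'']"
    using set_nbr_triangle_cnext[of nbr b w, OF dl w] unfolding w'_def w''_def by auto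
  have "(\<Sum>x\<in>set (nbr b). \<mu> b x *s P x) = 0"
    using v b unfolding affine_vrc_def P_def by blast
  then have "\<mu> b w *s P w + \<mu> b w' *s P w' + \<mu> b w'' *s P w'' = 0"
    using D unfolding S by (simp add: add.assoc)
  moreover have "\<mu> b w + \<mu> b w' + \<mu> b w'' = 0"
    using affine_vrc_weight_sum[OF g h v b] D unfolding S by (simp add: add.assoc)
  moreover have "\<mu> b w' \<noteq> 0" using v b S unfolding affine_vrc_def by auto
  ultimately have rel: "P w' - P w = (\<mu> b w'' / \<mu> b w') *s (P w - P w'')"
    by (rule affine_relation_diff)
  have "set (nbr b) \<subseteq> W" using g b unfolding btb_graph_def by blast
  then have "lform hv (T w) \<noteq> 0" "lform hv (T w'') \<noteq> 0"
    using h S unfolding generic_hyperplane_def by auto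
  moreover have "\<not> proj_eq (T w) (T w'')"
    using tcd_map_not_proj_eq[OF t b dl(2)] S D by auto
  ultimately have ne: "P w \<noteq> P w''"
    using proj_eq_if_aff_lift_eq[of hv T w w''] unfolding P_def by blast
  show "vratio (P w' - P w) (P w - P w'') = \<mu> b w'' / \<mu> b w'"
    using rel ne by (intro vratio_eqI) auto
  have "P w' - P w = - (\<mu> b w'' / \<mu> b w') *s (P w'' - P w)"
    using rel by (metis minus_diff_eq vector_smult_lneg vector_smult_rneg)
  then show "lam (P w') (P w'') (P w) = - (\<mu> b w'' / \<mu> b w')"
    unfolding lam_def using ne by (intro vratio_eqI) auto
qed

theorem proposition7p18:
  fixes W B Wb :: "'v set" and nbr :: "'v \<Rightarrow> 'v list"
    and T :: "'v \<Rightarrow> complex^'n" and hv :: "complex^'n"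
    and \<mu> :: "'v \<Rightarrow> 'v \<Rightarrow> complex" and w :: 'v
  assumes "minimal_btb W B Wb nbr"
    and "tcd_map W B nbr T"
    and "generic_hyperplane W T hv"
    and "affine_vrc B nbr hv T \<mu>"
    and "w \<in> W - Wb"
  shows "let m = length (nbr w); P = aff_lift hv T;
             bs = (\<lambda>i. nbr w ! i);
             Q = (\<lambda>i. P (cnext nbr (bs i) w));
             Q' = (\<lambda>i. P (cnext nbr (bs i) (cnext nbr (bs i) w)))
         in affine_Y nbr \<mu> w = (-1) ^ (m + 1) * star_ratio (P w) Q Q' m
          \<and> affine_Y nbr \<mu> w = - (\<Prod>i<m. lam (Q i) (Q' i) (P w))"
proof -
  have g: "btb_graph W B Wb nbr" using assms(1) unfolding minimal_btb_def by blast
  define m where "m = length (nbr w)"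
  define P where "P = aff_lift hv T"
  define Q where "Q = (\<lambda>i. P (cnext nbr (nbr w ! i) w))"
  define Q' where "Q' = (\<lambda>i. P (cnext nbr (nbr w ! i) (cnext nbr (nbr w ! i) w)))"
  define r where "r = (\<lambda>i. let b = nbr w ! i; wi = cnext nbr b w; wi' = cnext nbr b wi
                              in \<mu> b wi' / \<mu> b wi)"
  have "w \<in> W" using assms(5) by blast
  then have nbr_w: "set (nbr w) \<subseteq> B" and adj: "\<forall>b\<in>B. b \<in> set (nbr w) \<longleftrightarrow> w \<in> set (nbr b)"
    using g unfolding btb_graph_def by blast+
  have "nbr w ! i \<in> B" "w \<in> set (nbr (nbr w ! i))" if "i < m" for i
    using that nth_mem[of i "nbr w"] nbr_w adj unfolding m_def by blast+
  note ratio = affine_vrc_black_vertex_ratio[OF g assms(2-4) this, folded P_def]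
  have Y: "affine_Y nbr \<mu> w = (-1) ^ (m + 1) * (\<Prod>i<m. r i)"
    unfolding affine_Y_def r_def m_def Let_def by simp
  have "star_ratio (P w) Q Q' m = (\<Prod>i<m. r i)"
    unfolding star_ratio_def Q_def Q'_def r_def Let_def using ratio(1) by (intro prod.cong) auto
  moreover have "(\<Prod>i<m. lam (Q i) (Q' i) (P w)) = (\<Prod>i<m. - r i)"
    unfolding Q_def Q'_def r_def Let_def using ratio(2) by (intro prod.cong) auto
  ultimately show ?thesis
    using Y unfolding Let_def m_def[symmetric] P_def[symmetric] Q_def Q'_def
    by (simp add: prod_uminus)
qed

end
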